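(* For $r\in\mathbb{N}_0$ and $n\ge1$, the expected size $E^L_{n;r}$ of the $r$th fringe of a simple two-dimensional lattice path chosen uniformly at random among the $4^n$ paths of length $n$ is \[ E^L_{n;r}=4^{r+1-n}\sum_{\lambda\ge1}\frac{2\lambda^3+\lambda}{3}\bigg[\binom{2n-1}{n-2^r\lambda}-\binom{2n-1}{n-2^r\lambda-1}\bigg], \] where binomial coefficients with negative lower index are $0$.
   Context: A simple two-dimensional lattice path is a finite nonempty word over the steps $\{\uparrow,\rightarrow,\downarrow,\leftarrow\}$; its length $|\ell|$ is the number of steps. The reduction $\Phi_L(\ell)$ of a path $\ell$ of length $\ge2$: first, if the first step of $\ell$ is vertical, the entire path is rotated by $90^\circ$ clockwise; then, if the last step is horizontal, this last step alone is rotated by $90^\circ$ clockwise. The resulting path decomposes uniquely as $H_1V_1\cdots H_kV_k$ ($k\ge1$) with each $H_i$ a nonempty maximal run of horizontal steps and each $V_i$ a nonempty maximal run of vertical steps. Each block $H_iV_i$ is replaced by $\nearrow$, $\searrow$, $\swarrow$, $\nwarrow$ according as ($H_i$ starts with $\rightarrow$, $V_i$ with $\uparrow$), ($\rightarrow$, $\downarrow$), ($\leftarrow$, $\downarrow$), ($\leftarrow$, $\uparrow$); the diagonal path is then rotated by $45^\circ$ clockwise, giving $\Phi_L(\ell)$ of length $k$. The compactification degree $\mathrm{cdeg}(\ell)$ is the number $m\ge0$ such that $\Phi_L^m(\ell)$ is a single step. The size of the $r$th fringe of $\ell$ is $|\Phi_L^r(\ell)|$ if $\mathrm{cdeg}(\ell)\ge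 r$, and $0$ otherwise. *)

theory Defs
  imports Complex_Main
begin

datatype step = U | R | D | L

lemma UNIV_step: "(UNIV :: step set) = {U, R, D, L}"
  by (auto intro: step.exhaust)

instance step :: finite
  by standard (simp add: UNIV_step)

type_synonym lpath = "step list"

definition vertical :: "step \<Rightarrow> bool" where
  "vertical s \<longleftrightarrow> s = U \<or> s = D"

definition horizontal :: "step \<Rightarrow> bool" where
  "horizontal s \<longleftrightarrow> s = R \<or> s = L"

fun rot :: "step \<Rightarrow> step" where
  "rot U = R" | "rot R = D" | "rot D = L" | "rot L = U"

text \<open>Block H V, with H starting with a and V starting with b, is replaced by a diagonal
  step which is then rotated by 45 degrees clockwise:
  NE \<mapsto> right, SE \<mapsto> down, SW \<mapsto> left, NW \<mapsto> up.\<close>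
fun diag :: "step \<Rightarrow> step \<Rightarrow> step" where
  "diag R U = R" | "diag R D = D" | "diag L D = L" | "diag L U = U"
| "diag _ _ = undefined"

function blocks :: "lpath \<Rightarrow> lpath" where
  "blocks [] = []"
| "blocks (s # xs) =
     (let h = takeWhile horizontal (s # xs);
          rest = dropWhile horizontal (s # xs);
          v = takeWhile vertical rest;
          rest2 = dropWhile vertical rest
      in diag (hd h) (hd v) # blocks rest2)"
  by pat_completeness auto
lemma len_dw_le: "length (dropWhile P xs) \<le> length xs"
  by (rule length_dropWhile_le)

lemma blocks_term_aux:
  "length (dropWhile vertical (dropWhile horizontal (s # xs))) < Suc (length xs)"
proof (cases "horizontal s")
  case True
  have "length (dropWhile vertical (dropWhile horizontal xs)) \<le> length xs"
    using len_dw_le[of vertical "dropWhile horizontal xs"] len_dw_le[of horizontal xs]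
    by linarith
  with True show ?thesis by simp
next
  case False
  then have "vertical s" by (cases s) (auto simp: horizontal_def vertical_def)
  with False show ?thesis
    using len_dw_le[of vertical xs] by simp
qed

termination
proof (relation "measure length")
  show "wf (measure length)" by simp
next
  fix s :: step and xs h rest v rest2
  assume "h = takeWhile horizontal (s # xs)" "rest = dropWhile horizontal (s # xs)"
    "v = takeWhile vertical rest" "rest2 = dropWhile vertical rest"
  then show "(rest2, s # xs) \<in> measure length"
    using blocks_term_aux[of s xs] by (simp only: in_measure list.size)
qed

text \<open>The reduction Phi_L (meaningful for paths of length at least 2).\<close>
definition phiL :: "lpath \<Rightarrow> lpath" where
  "phiL l =
     (let l1 = (if vertical (hd l) then map rot l else l);
          l2 = (if horizontal (last l1) then butlast l1 @ [rot (last l1)] else l1)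
      in blocks l2)"

definition cdeg :: "lpath \<Rightarrow> nat" where
  "cdeg l = (LEAST m. length ((phiL ^^ m) l) = 1)"

definition fringe_size :: "nat \<Rightarrow> lpath \<Rightarrow> nat" where
  "fringe_size r l = (if cdeg l \<ge> r then length ((phiL ^^ r) l) else 0)"

definition expected_fringe :: "nat \<Rightarrow> nat \<Rightarrow> real" where
  "expected_fringe n r =
     (\<Sum>l\<in>{l :: lpath. length l = n}. real (fringe_size r l)) / 4 ^ n"

definition binomZ :: "nat \<Rightarrow> int \<Rightarrow> nat" where
  "binomZ m k = (if k < 0 then 0 else m choose nat k)"

end

theory Submission
  imports Defs
begin

text \<open>
  The normalisation step of \<open>\<Phi>\<^sub>L\<close> maps the paths of length at least two four-to-one onto
  the paths that start horizontally and end vertically, and on those \<open>\<Phi>\<^sub>L\<close> is the block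
  reduction. The number of such paths of length \<open>m\<close> reducing to a given path of length \<open>k\<close>
  depends only on \<open>m\<close> and \<open>k\<close>; calling it \<open>A(m,k)\<close>, the total size \<open>F_r(n)\<close> of the \<open>r\<close>th
  fringes of all \<open>4^n\<close> paths satisfies \<open>F_{r+1}(n) = 4 \<Sum>_k A(n,k) F_r(k)\<close>. The ballot
  differences \<open>D_n(j) = C(2n-1,n-j) - C(2n-1,n-j-1)\<close> obey
  \<open>D_{n+1}(j) = D_n(j-1) + 2 D_n(j) + D_n(j+1)\<close>, which together with the recursion for \<open>A\<close>
  yields \<open>\<Sum>_k A(n,k) D_k(j) = D_n(2j)\<close>: one reduction doubles the index. Since
  \<open>F_0(n) = n 4^n = 4 \<Sum>_l g(l) D_n(l)\<close> with \<open>g(l) = (2l^3+l)/3\<close>, induction on \<open>r\<close> gives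
  \<open>F_r(n) = 4^{r+1} \<Sum>_l g(l) D_n(2^r l)\<close>.
\<close>

subsection \<open>Sums over the paths of a given length\<close>

lemma horizontal_iff_not_vertical: "horizontal s \<longleftrightarrow> \<not> vertical s"
  by (cases s) (auto simp: horizontal_def vertical_def)

lemma sum_UNIV_step: "(\<Sum>s\<in>(UNIV::step set). f s) = f U + f R + f D + f L"
  by (simp add: UNIV_step add.assoc)

lemma sum_paths_Cons:
  "(\<Sum>x::lpath | length x = Suc m. f x) = (\<Sum>s\<in>UNIV. \<Sum>x | length x = m. f (s # x))"
proof -
  have paths: "{x::lpath. length x = Suc m} = (\<lambda>(s, x). s # x) ` (UNIV \<times> {x. length x = m})"
    by (auto simp: length_Suc_conv image_iff)
  have inj: "inj_on (\<lambda>(s, x). s # x) (UNIV \<times> {x::lpath. length x = m})"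
    by (auto simp: inj_on_def)
  show ?thesis
    unfolding paths sum.reindex[OF inj] sum.cartesian_product by (simp add: case_prod_beta comp_def)
qed

lemma sum_paths_snoc:
  "(\<Sum>x::lpath | length x = Suc m. f x) = (\<Sum>s\<in>UNIV. \<Sum>x | length x = m. f (x @ [s]))"
proof -
  have paths: "{x::lpath. length x = Suc m} = (\<lambda>(s, x). x @ [s]) ` (UNIV \<times> {x. length x = m})"
    by (auto simp: length_Suc_conv_rev image_iff)
  have inj: "inj_on (\<lambda>(s, x). x @ [s]) (UNIV \<times> {x::lpath. length x = m})"
    by (auto simp: inj_on_def)
  show ?thesis
    unfolding paths sum.reindex[OF inj] sum.cartesian_product by (simp add: case_prod_beta comp_def)
qed

lemma sum_paths_map_rot: "(\<Sum>x | length x = m. f (map rot x)) = (\<Sum>x | length x = m. f x)"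
proof (induction m arbitrary: f)
  case (Suc m)
  have "(\<Sum>x | length x = Suc m. f (map rot x)) = (\<Sum>s\<in>UNIV. \<Sum>x | length x = m. f (rot s # x))"
    unfolding sum_paths_Cons using Suc.IH[of "\<lambda>x. f (rot _ # x)"] by simp
  also have "\<dots> = (\<Sum>x | length x = Suc m. f x)"
    unfolding sum_paths_Cons sum_UNIV_step by (simp add: add_ac)
  finally show ?case .
qed simp

lemma sum_paths_Nil:
  "(\<Sum>x::lpath | length x = m. if x = [] then c else 0) = (if m = 0 then c else 0)"
  by (cases m) (auto simp: sum_paths_Cons)

definition path_sum :: "nat \<Rightarrow> (lpath \<Rightarrow> real) \<Rightarrow> real" where
  "path_sum k G = (\<Sum>l | length l = k. G l)"

lemma path_sum_0: "path_sum 0 G = G []"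
  by (simp add: path_sum_def)

lemma path_sum_Suc:
  "path_sum (Suc k) G = path_sum k (\<lambda>q. G (U # q)) + path_sum k (\<lambda>q. G (R # q))
     + path_sum k (\<lambda>q. G (D # q)) + path_sum k (\<lambda>q. G (L # q))"
  by (simp add: path_sum_def sum_paths_Cons sum_UNIV_step)

lemma path_sum_cong: "(\<And>l. length l = k \<Longrightarrow> F l = G l) \<Longrightarrow> path_sum k F = path_sum k G"
  unfolding path_sum_def by (rule sum.cong) auto

lemma path_sum_const: "path_sum k (\<lambda>_. c) = c * 4 ^ k"
  by (induction k) (simp_all add: path_sum_0 path_sum_Suc)

subsection \<open>The block reduction\<close>

text \<open>
  A diagonal step \<open>diag a u\<close> remembers its vertical part \<open>u\<close>; \<open>set_horizontal s\<close> replaces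
  the horizontal part of the first diagonal step by \<open>s\<close>. Prepending a horizontal step to a
  path that starts horizontally acts on its reduction in this way.
\<close>

fun vertical_part :: "step \<Rightarrow> step" where
  "vertical_part R = U" | "vertical_part U = U" | "vertical_part D = D" | "vertical_part L = D"

fun set_horizontal :: "step \<Rightarrow> lpath \<Rightarrow> lpath" where
  "set_horizontal s [] = []"
| "set_horizontal s (c # q) = diag s (vertical_part c) # q"

lemma vertical_part_diag: "horizontal a \<Longrightarrow> vertical u \<Longrightarrow> vertical_part (diag a u) = u"
  by (cases a; cases u) (auto simp: horizontal_def vertical_def)

lemma path_sum_set_horizontal:
  "path_sum k (\<lambda>q. G (set_horizontal R q)) + path_sum k (\<lambda>q. G (set_horizontal L q)) = 2 * path_sum k G"
  by (cases k) (simp_all add: path_sum_0 path_sum_Suc)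

lemma blocks_horizontal_vertical:
  "horizontal s \<Longrightarrow> x \<noteq> [] \<Longrightarrow> vertical (hd x) \<Longrightarrow>
   blocks (s # x) = diag s (hd x) # blocks (dropWhile vertical x)"
  by (cases x) (auto simp: Let_def horizontal_iff_not_vertical)

lemma dropWhile_horizontal_ne:
  assumes "horizontal a" "vertical (last (a # x))"
  shows "dropWhile horizontal x \<noteq> [] \<and> vertical (hd (dropWhile horizontal x))"
proof -
  have "\<exists>y\<in>set x. vertical y"
    using assms by (cases x rule: rev_cases) (auto simp: horizontal_iff_not_vertical)
  then have "dropWhile horizontal x \<noteq> []"
    by (auto simp: dropWhile_eq_Nil_conv horizontal_iff_not_vertical)
  then show ?thesis
    using hd_dropWhile[of horizontal x] by (simp add: horizontal_iff_not_vertical)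
qed

lemma blocks_horizontal_horizontal:
  assumes "horizontal s" "horizontal a" "vertical (last (a # x))"
  shows "blocks (s # a # x) = set_horizontal s (blocks (a # x))"
proof -
  define r where "r = dropWhile horizontal x"
  have "r \<noteq> []" "vertical (hd r)"
    using dropWhile_horizontal_ne[OF assms(2,3)] by (simp_all add: r_def)
  then have "takeWhile vertical r \<noteq> [] \<and> hd (takeWhile vertical r) = hd r"
    by (cases r) auto
  with assms \<open>vertical (hd r)\<close> show ?thesis
    by (simp add: Let_def r_def[symmetric] vertical_part_diag)
qed

declare blocks.simps(2)[simp del]

lemma length_blocks_le: "length (blocks x) \<le> length x"
proof (induction x rule: blocks.induct)
  case (2 s xs)
  define rest where "rest = dropWhile vertical (dropWhile horizontal (s # xs))"
  have "length (blocks (s # xs)) = Suc (length (blocks rest))"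
    by (subst blocks.simps(2)) (simp only: Let_def rest_def list.size add_Suc_right add_0_right)
  moreover have "length (blocks rest) \<le> length rest"
    unfolding rest_def by (rule 2[OF refl refl refl refl])
  moreover have "length rest < Suc (length xs)"
    unfolding rest_def by (rule blocks_term_aux)
  ultimately show ?case by simp
qed simp

lemma blocks_eq_Nil_iff: "blocks x = [] \<longleftrightarrow> x = []"
  by (cases x) (simp_all add: Let_def blocks.simps(2))

definition normal :: "lpath \<Rightarrow> bool" where
  "normal x \<longleftrightarrow> x \<noteq> [] \<and> horizontal (hd x) \<and> vertical (last x)"

definition vertical_ends :: "lpath \<Rightarrow> bool" where
  "vertical_ends x \<longleftrightarrow> x \<noteq> [] \<and> vertical (hd x) \<and> vertical (last x)"

lemma length_blocks_normal:
  assumes "normal x"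
  shows "length (blocks x) < length x"
proof -
  obtain a x' where x: "x = a # x'" and a: "horizontal a" and last: "vertical (last (a # x'))"
    using assms by (cases x) (auto simp: normal_def)
  define r where "r = dropWhile horizontal x'"
  obtain b r' where r: "r = b # r'" and b: "vertical b"
    using dropWhile_horizontal_ne[OF a last] unfolding r_def[symmetric] by (cases r) auto
  have "length (blocks x) = Suc (length (blocks (dropWhile vertical r)))"
    using a unfolding x by (subst blocks.simps(2)) (simp add: Let_def r_def)
  also have "\<dots> \<le> Suc (length (dropWhile vertical r'))"
    using length_blocks_le b by (simp add: r)
  also have "\<dots> < length x"
    using length_dropWhile_le[of vertical r'] length_dropWhile_le[of horizontal x']
    by (simp add: x r_def[symmetric] r)
  finally show ?thesis .
qed

subsection \<open>Counting preimages under the block reduction\<close>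

definition normal_sum :: "nat \<Rightarrow> (lpath \<Rightarrow> real) \<Rightarrow> real" where
  "normal_sum m G = (\<Sum>x | length x = m. if normal x then G (blocks x) else 0)"

definition vertical_ends_sum :: "nat \<Rightarrow> (step \<Rightarrow> lpath \<Rightarrow> real) \<Rightarrow> real" where
  "vertical_ends_sum m G =
     (\<Sum>x | length x = m. if vertical_ends x then G (hd x) (blocks (dropWhile vertical x)) else 0)"

lemma normal_summand_Cons:
  fixes G :: "lpath \<Rightarrow> real"
  shows "(if normal (s # x) then G (blocks (s # x)) else 0) =
    (if horizontal s then
       (if normal x then G (set_horizontal s (blocks x)) else 0)
       + (if vertical_ends x then G (diag s (hd x) # blocks (dropWhile vertical x)) else 0)
     else 0)"
proof (cases "horizontal s \<and> x \<noteq> []")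
  case True
  then show ?thesis
    using blocks_horizontal_vertical[of s x] blocks_horizontal_horizontal[of s "hd x" "tl x"]
    by (cases x) (auto simp: normal_def vertical_ends_def horizontal_iff_not_vertical)
qed (auto simp: normal_def vertical_ends_def horizontal_iff_not_vertical)

lemma normal_sum_Suc:
  "normal_sum (Suc m) G =
     normal_sum m (\<lambda>q. G (set_horizontal R q)) + normal_sum m (\<lambda>q. G (set_horizontal L q))
     + vertical_ends_sum m (\<lambda>t q. G (diag R t # q)) + vertical_ends_sum m (\<lambda>t q. G (diag L t # q))"
  unfolding normal_sum_def vertical_ends_sum_def sum_paths_Cons normal_summand_Cons
  by (simp add: sum_UNIV_step horizontal_iff_not_vertical vertical_def sum.distrib)

lemma vertical_ends_summand_Cons:
  fixes G :: "step \<Rightarrow> lpath \<Rightarrow> real"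
  shows "(if vertical_ends (t # x) then G (hd (t # x)) (blocks (dropWhile vertical (t # x))) else 0) =
    (if vertical t then
       (if x = [] then G t [] else 0)
       + (if vertical_ends x then G t (blocks (dropWhile vertical x)) else 0)
       + (if normal x then G t (blocks x) else 0)
     else 0)"
  by (cases x) (auto simp: normal_def vertical_ends_def horizontal_iff_not_vertical)

lemma vertical_ends_sum_Suc:
  "vertical_ends_sum (Suc m) G = (if m = 0 then G U [] + G D [] else 0)
     + vertical_ends_sum m (\<lambda>_ q. G U q) + normal_sum m (G U)
     + vertical_ends_sum m (\<lambda>_ q. G D q) + normal_sum m (G D)"
  unfolding vertical_ends_sum_def normal_sum_def sum_paths_Cons vertical_ends_summand_Cons
  by (simp add: sum_UNIV_step vertical_def sum.distrib sum_paths_Nil)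

text \<open>
  \<open>mult_hv m k\<close> is the number of normalised paths of length \<open>m\<close> whose reduction is a given
  path of length \<open>k\<close>; \<open>mult_vv m k\<close> is the analogue for paths with both ends vertical and a
  given first step, whose leading vertical run is discarded.
\<close>

fun mult_hv :: "nat \<Rightarrow> nat \<Rightarrow> real" and mult_vv :: "nat \<Rightarrow> nat \<Rightarrow> real" where
  "mult_hv 0 k = 0"
| "mult_hv (Suc m) k = 2 * mult_hv m k + (case k of 0 \<Rightarrow> 0 | Suc k' \<Rightarrow> mult_vv m k')"
| "mult_vv 0 k = 0"
| "mult_vv (Suc m) k = (if m = 0 \<and> k = 0 then 1 else 0) + 2 * mult_vv m k + mult_hv m k"

lemma mult_hv_0_right [simp]: "mult_hv m 0 = 0"
  by (induction m) auto

lemma sum_atMost_delta_0: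
  fixes f :: "nat \<Rightarrow> 'a::semiring_1"
  shows "(\<Sum>k\<le>N. (if P \<and> k = 0 then 1 else 0) * f k) = (if P then f 0 else 0)"
  by (induction N) auto

lemma normal_sum_expansion:
  assumes "m \<le> N"
  shows "normal_sum m G = (\<Sum>k\<le>N. mult_hv m k * path_sum k G) \<and>
    vertical_ends_sum m G' = (\<Sum>k\<le>N. mult_vv m k * (path_sum k (G' U) + path_sum k (G' D)))"
  using assms
proof (induction m arbitrary: G G' N)
  case 0
  then show ?case by (simp add: normal_sum_def vertical_ends_sum_def normal_def vertical_ends_def)
next
  case (Suc m)
  then obtain N' where N': "N = Suc N'" "m \<le> N'" by (cases N) auto
  have hv: "normal_sum m F = (\<Sum>k\<le>N. mult_hv m k * path_sum k F)"
    and vv: "vertical_ends_sum m F' = (\<Sum>k\<le>N. mult_vv m k * (path_sum k (F' U) + path_sum k (F' D)))"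
    for F F' using Suc.IH[of N] Suc.prems by auto
  have vv': "vertical_ends_sum m F' = (\<Sum>k\<le>N'. mult_vv m k * (path_sum k (F' U) + path_sum k (F' D)))"
    for F' using Suc.IH[OF N'(2)] by auto
  have "normal_sum (Suc m) G =
      (\<Sum>k\<le>N. mult_hv m k *
         (path_sum k (\<lambda>q. G (set_horizontal R q)) + path_sum k (\<lambda>q. G (set_horizontal L q))))
      + (\<Sum>k\<le>N'. mult_vv m k *
         (path_sum k (\<lambda>q. G (diag R U # q)) + path_sum k (\<lambda>q. G (diag R D # q))
          + path_sum k (\<lambda>q. G (diag L U # q)) + path_sum k (\<lambda>q. G (diag L D # q))))"
    unfolding normal_sum_Suc hv vv' by (simp add: algebra_simps sum.distrib)
  also have "\<dots> =
      (\<Sum>k\<le>N. 2 * mult_hv m k * path_sum k G) + (\<Sum>k\<le>N'. mult_vv m k * path_sum (Suc k) G)"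
    using path_sum_set_horizontal[of _ G] by (simp add: path_sum_Suc add_ac mult_ac)
  also have "\<dots> = (\<Sum>k\<le>N. mult_hv (Suc m) k * path_sum k G)"
    unfolding N'(1) sum.atMost_Suc_shift by (simp add: algebra_simps sum.distrib)
  finally have "normal_sum (Suc m) G = (\<Sum>k\<le>N. mult_hv (Suc m) k * path_sum k G)" .
  moreover have "vertical_ends_sum (Suc m) G' =
      (\<Sum>k\<le>N. ((if m = 0 \<and> k = 0 then 1 else 0) + 2 * mult_vv m k + mult_hv m k)
                 * (path_sum k (G' U) + path_sum k (G' D)))"
    unfolding vertical_ends_sum_Suc hv vv distrib_right sum.distrib sum_atMost_delta_0
    by (simp add: algebra_simps sum.distrib sum_distrib_left path_sum_0)
  ultimately show ?case by simp
qed

subsection \<open>The reduction \<open>\<Phi>\<^sub>L\<close> and the fringe sizes\<close>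

definition make_vertical :: "step \<Rightarrow> step" where
  "make_vertical c = (if horizontal c then rot c else c)"

lemma vertical_make_vertical: "vertical (make_vertical c)"
  by (cases c) (auto simp: make_vertical_def vertical_def horizontal_def)

lemma phiL_Cons_snoc:
  "phiL (s # x @ [t]) =
     (if vertical s then blocks (rot s # map rot x @ [make_vertical (rot t)])
      else blocks (s # x @ [make_vertical t]))"
  by (simp add: phiL_def Let_def make_vertical_def butlast_append)

lemma phiL_normal:
  obtains y where "phiL (s # x @ [t]) = blocks y" "normal y" "length y = length x + 2"
proof (cases "vertical s")
  case True
  then have "horizontal (rot s)"
    by (cases s) (auto simp: vertical_def horizontal_def)
  with True that[of "rot s # map rot x @ [make_vertical (rot t)]"] show ?thesis
    by (simp add: phiL_Cons_snoc normal_def vertical_make_vertical)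
next
  case False
  with that[of "s # x @ [make_vertical t]"] show ?thesis
    by (simp add: phiL_Cons_snoc normal_def vertical_make_vertical horizontal_iff_not_vertical)
qed

lemma length_Cons_snoc_cases:
  assumes "2 \<le> length l"
  obtains s x t where "l = s # x @ [t]"
proof -
  obtain s y where "l = s # y" "y \<noteq> []"
    using assms by (cases l) (auto simp: Suc_le_eq)
  with that show ?thesis by (cases y rule: rev_cases) auto
qed

lemma length_phiL:
  assumes "2 \<le> length l"
  shows "1 \<le> length (phiL l) \<and> length (phiL l) < length l"
proof -
  obtain s x t where l: "l = s # x @ [t]"
    using length_Cons_snoc_cases[OF assms] .
  obtain y where "phiL l = blocks y" "normal y" "length y = length l"
    using phiL_normal[of s x t] unfolding l by auto
  then show ?thesis
    using length_blocks_normal[of y] blocks_eq_Nil_iff[of y] by (auto simp: normal_def Suc_le_eq)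
qed

text \<open>Each normalised path arises from four paths: the first step may or may not have been
  rotated, and the last step may or may not have been turned vertical.\<close>

lemma sum_phiL:
  "(\<Sum>l | length l = Suc (Suc m). G (phiL l)) = 4 * normal_sum (Suc (Suc m)) G"
proof -
  define K where "K a b = (\<Sum>x | length x = m. G (blocks (a # x @ [b])))" for a b
  have phi: "(\<Sum>x | length x = m. G (phiL (s # x @ [t]))) =
      (if vertical s then K (rot s) (make_vertical (rot t)) else K s (make_vertical t))" for s t
    unfolding phiL_Cons_snoc K_def
    using sum_paths_map_rot[of "\<lambda>x. G (blocks (rot s # x @ [make_vertical (rot t)]))" m] by simp
  have "(\<Sum>l | length l = Suc (Suc m). G (phiL l)) =
      (\<Sum>s\<in>UNIV. \<Sum>t\<in>UNIV. \<Sum>x | length x = m. G (phiL (s # x @ [t])))"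
    by (simp only: sum_paths_Cons[where m = "Suc m"] sum_paths_snoc[where m = m])
  also have "\<dots> = 4 * (K R U + K R D + K L U + K L D)"
    unfolding phi sum_UNIV_step by (simp add: vertical_def make_vertical_def horizontal_def)
  also have "K R U + K R D + K L U + K L D = normal_sum (Suc (Suc m)) G"
    unfolding normal_sum_def sum_paths_Cons[where m = "Suc m"] sum_paths_snoc[where m = m]
      sum_UNIV_step K_def
    by (simp add: normal_def vertical_def horizontal_def)
  finally show ?thesis .
qed

lemma phiL_funpow_length_1:
  "1 \<le> length l \<Longrightarrow> \<exists>m. length ((phiL ^^ m) l) = 1"
proof (induction "length l" arbitrary: l rule: less_induct)
  case less
  show ?case
  proof (cases "length l = 1")
    case False
    then have "2 \<le> length l" using less.prems by simp
    with length_phiL less.hyps obtain m where "length ((phiL ^^ m) (phiL l)) = 1" by blast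
    then have "length ((phiL ^^ Suc m) l) = 1" by (simp add: funpow_Suc_right del: funpow.simps)
    then show ?thesis ..
  qed (auto intro: exI[of _ 0])
qed

lemma cdeg_phiL: "2 \<le> length l \<Longrightarrow> cdeg l = Suc (cdeg (phiL l))"
proof -
  assume l: "2 \<le> length l"
  obtain m where "length ((phiL ^^ m) l) = 1"
    using phiL_funpow_length_1 l by fastforce
  then have "cdeg l = Suc (LEAST m. length ((phiL ^^ Suc m) l) = 1)"
    unfolding cdeg_def by (rule Least_Suc) (use l in simp)
  then show ?thesis
    unfolding cdeg_def by (simp add: funpow_Suc_right del: funpow.simps)
qed

lemma fringe_size_Suc:
  "fringe_size (Suc r) l = (if length l = 1 then 0 else fringe_size r (phiL l))"
  if "1 \<le> length l"
proof (cases "length l = 1")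
  case True
  then have "cdeg l = 0" unfolding cdeg_def by (intro Least_eq_0) simp
  with True show ?thesis by (simp add: fringe_size_def)
next
  case False
  with that show ?thesis
    by (simp add: fringe_size_def cdeg_phiL funpow_Suc_right del: funpow.simps)
qed

definition fringe_total :: "nat \<Rightarrow> nat \<Rightarrow> real" where
  "fringe_total r n = path_sum n (\<lambda>l. real (fringe_size r l))"

lemma fringe_total_0: "fringe_total 0 n = real n * 4 ^ n"
proof -
  have "fringe_total 0 n = path_sum n (\<lambda>_. real n)"
    unfolding fringe_total_def by (rule path_sum_cong) (simp add: fringe_size_def)
  then show ?thesis by (simp add: path_sum_const)
qed

lemma fringe_total_Suc_1: "fringe_total (Suc r) 1 = 0"
proof -
  have "fringe_total (Suc r) 1 = path_sum 1 (\<lambda>_. 0)"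
    unfolding fringe_total_def by (rule path_sum_cong) (simp add: fringe_size_Suc)
  then show ?thesis by (simp add: path_sum_const)
qed

lemma fringe_total_Suc:
  assumes "2 \<le> n"
  shows "fringe_total (Suc r) n = 4 * (\<Sum>k\<le>n. mult_hv n k * fringe_total r k)"
proof -
  obtain m where m: "n = Suc (Suc m)"
    using assms by (metis add_2_eq_Suc le_Suc_ex)
  have "fringe_total (Suc r) n = path_sum n (\<lambda>l. real (fringe_size r (phiL l)))"
    unfolding fringe_total_def by (rule path_sum_cong) (simp add: fringe_size_Suc m)
  also have "\<dots> = 4 * normal_sum n (\<lambda>l. real (fringe_size r l))"
    unfolding path_sum_def m by (rule sum_phiL)
  also have "\<dots> = 4 * (\<Sum>k\<le>n. mult_hv n k * fringe_total r k)"
    using normal_sum_expansion[of n n] by (simp add: fringe_total_def)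
  finally show ?thesis .
qed

subsection \<open>Ballot differences\<close>

definition ballot :: "nat \<Rightarrow> int \<Rightarrow> real" where
  "ballot n j = real (binomZ (2 * n - 1) (int n - j)) - real (binomZ (2 * n - 1) (int n - j - 1))"

lemma binomZ_Suc: "binomZ (Suc m) i = binomZ m i + binomZ m (i - 1)"
proof (cases "i \<le> 0")
  case False
  then have "nat i = Suc (nat (i - 1))" "\<not> i - 1 < 0" by auto
  with False show ?thesis by (simp add: binomZ_def)
qed (auto simp: binomZ_def)

lemma ballot_Suc:
  assumes "1 \<le> n"
  shows "ballot (Suc n) j = ballot n (j - 1) + 2 * ballot n j + ballot n (j + 1)"
proof -
  have m: "2 * Suc n - 1 = Suc (Suc (2 * n - 1))" using assms by simp
  have "int (Suc n) - j = int n - (j - 1)" "int (Suc n) - j - 1 = int n - j" by simp_all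
  then show ?thesis
    unfolding ballot_def m by (simp add: binomZ_Suc algebra_simps)
qed

lemma ballot_eq_0_above: "int n < j \<Longrightarrow> ballot n j = 0"
  by (simp add: ballot_def binomZ_def)

lemma ballot_0: "1 \<le> n \<Longrightarrow> ballot n 0 = 0"
  using binomial_symmetric[of n "2 * n - 1"] by (simp add: ballot_def binomZ_def nat_diff_distrib)

lemma ballot_Suc_0: "ballot (Suc 0) j = (if j = 1 then 1 else if j = -1 then -1 else 0)"
proof -
  consider "j = 1" | "j = 0" | "j = -1" | "j > 1" | "j < -1" by linarith
  then show ?thesis
  proof cases
    case 5
    then have "nat (1 - j) > 1" "nat (- j) > 1" by auto
    with 5 show ?thesis by (simp add: ballot_def binomZ_def binomial_eq_0)
  qed (auto simp: ballot_def binomZ_def)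
qed

lemma ballot_Suc_0_even: "ballot (Suc 0) (2 * j) = 0"
proof -
  have "2 * j \<noteq> 1" "2 * j \<noteq> -1" by presburger+
  then show ?thesis using ballot_Suc_0[of "2 * j"] by simp
qed

lemma ballot_Suc_0_of_nat: "ballot (Suc 0) (int l) = (if l = 1 then 1 else 0)"
  using ballot_Suc_0[of "int l"] by auto

lemma mult_hv_ballot_Suc:
  "mult_hv n k * ballot (Suc k) j =
     mult_hv n k * ballot k (j - 1) + 2 * (mult_hv n k * ballot k j) + mult_hv n k * ballot k (j + 1)"
  by (cases "k = 0") (simp_all add: ballot_Suc algebra_simps)

lemma sum_mult_ballot_double:
  assumes "1 \<le> n" "n \<le> N"
  shows "(\<Sum>k\<le>N. mult_hv n k * ballot k j) = ballot n (2 * j) \<and>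
    (\<Sum>k\<le>N. mult_vv n k * ballot (Suc k) j) = ballot n (2 * j - 1) + ballot n (2 * j + 1)"
  using assms
proof (induction n arbitrary: N j rule: nat_induct_at_least)
  case base
  have "(\<Sum>k\<le>N. mult_vv 1 k * ballot (Suc k) j) = (\<Sum>k\<le>N. if k = 0 then ballot 1 j else 0)"
    by (rule sum.cong) auto
  also have "\<dots> = ballot 1 (2 * j - 1) + ballot 1 (2 * j + 1)"
    by (simp add: ballot_Suc_0)
  moreover have "mult_hv 1 k = 0" for k
    by (cases k) simp_all
  ultimately show ?case
    using ballot_Suc_0_even[of j] by (simp del: mult_hv.simps)
next
  case (Suc n)
  then obtain N' where N': "N = Suc N'" "n \<le> N'" by (cases N) auto
  have hv: "(\<Sum>k\<le>N. mult_hv n k * ballot k i) = ballot n (2 * i)"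
    and vv: "(\<Sum>k\<le>N. mult_vv n k * ballot (Suc k) i) = ballot n (2 * i - 1) + ballot n (2 * i + 1)"
    for i using Suc.IH[of N] Suc.prems by auto
  have vv': "(\<Sum>k\<le>N'. mult_vv n k * ballot (Suc k) i) = ballot n (2 * i - 1) + ballot n (2 * i + 1)"
    for i using Suc.IH[OF N'(2)] by auto
  have "(\<Sum>k\<le>N. mult_hv (Suc n) k * ballot k j) =
      2 * (\<Sum>k\<le>N. mult_hv n k * ballot k j) + (\<Sum>k\<le>N'. mult_vv n k * ballot (Suc k) j)"
    unfolding N'(1) sum.atMost_Suc_shift by (simp add: algebra_simps sum.distrib sum_distrib_left)
  also have "\<dots> = ballot (Suc n) (2 * j)"
    unfolding hv vv' ballot_Suc[OF Suc.hyps] by simp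
  finally have hv_Suc: "(\<Sum>k\<le>N. mult_hv (Suc n) k * ballot k j) = ballot (Suc n) (2 * j)" .
  have "(\<Sum>k\<le>N. mult_vv (Suc n) k * ballot (Suc k) j) =
      2 * (\<Sum>k\<le>N. mult_vv n k * ballot (Suc k) j) + (\<Sum>k\<le>N. mult_hv n k * ballot (Suc k) j)"
    using Suc.hyps by (simp add: algebra_simps sum.distrib sum_distrib_left)
  also have "\<dots> = 2 * (ballot n (2 * j - 1) + ballot n (2 * j + 1))
      + ballot n (2 * (j - 1)) + 2 * ballot n (2 * j) + ballot n (2 * (j + 1))"
    unfolding mult_hv_ballot_Suc sum.distrib sum_distrib_left[symmetric] vv hv by simp
  also have "\<dots> = ballot (Suc n) (2 * j - 1) + ballot (Suc n) (2 * j + 1)"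
  proof -
    have "2 * j - 1 - 1 = 2 * (j - 1)" "2 * j + 1 + 1 = 2 * (j + 1)" by simp_all
    then show ?thesis unfolding ballot_Suc[OF Suc.hyps] by (simp add: add.commute)
  qed
  finally show ?case using hv_Suc by simp
qed

text \<open>Summation by parts against the recursion of \<open>ballot\<close>; the boundary terms vanish.\<close>

lemma sum_ballot_Suc:
  fixes h :: "real \<Rightarrow> real"
  assumes "1 \<le> n" "n < N" "h 0 = 0"
  shows "(\<Sum>l\<le>N. h (real l) * ballot (Suc n) (int l)) =
     (\<Sum>l\<le>N. (h (real l + 1) + 2 * h (real l) + h (real l - 1)) * ballot n (int l))"
proof -
  obtain M where M: "N = Suc M" using assms by (cases N) auto
  have down: "(\<Sum>l\<le>N. h (real l) * ballot n (int l - 1)) = (\<Sum>l\<le>N. h (real l + 1) * ballot n (int l))"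
  proof -
    have "(\<Sum>l\<le>N. h (real l) * ballot n (int l - 1)) = (\<Sum>l\<le>M. h (real l + 1) * ballot n (int l))"
      unfolding M sum.atMost_Suc_shift by (simp add: assms(3) add_ac)
    also have "\<dots> = (\<Sum>l\<le>N. h (real l + 1) * ballot n (int l))"
      using ballot_eq_0_above[of n "int (Suc M)"] assms M by simp
    finally show ?thesis .
  qed
  have up: "(\<Sum>l\<le>N. h (real l) * ballot n (int l + 1)) = (\<Sum>l\<le>N. h (real l - 1) * ballot n (int l))"
  proof -
    have "(\<Sum>l\<le>Suc N. h (real l - 1) * ballot n (int l)) = (\<Sum>l\<le>N. h (real l) * ballot n (int l + 1))"
      unfolding sum.atMost_Suc_shift by (simp add: ballot_0[OF assms(1)] add_ac)
    moreover have "(\<Sum>l\<le>Suc N. h (real l - 1) * ballot n (int l)) = (\<Sum>l\<le>N. h (real l - 1) * ballot n (int l))"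
      using ballot_eq_0_above[of n "int (Suc N)"] assms by simp
    ultimately show ?thesis by simp
  qed
  have "(\<Sum>l\<le>N. h (real l) * ballot (Suc n) (int l)) =
      (\<Sum>l\<le>N. h (real l) * ballot n (int l - 1)) + 2 * (\<Sum>l\<le>N. h (real l) * ballot n (int l))
      + (\<Sum>l\<le>N. h (real l) * ballot n (int l + 1))"
    unfolding ballot_Suc[OF assms(1)] by (simp add: algebra_simps sum.distrib sum_distrib_left)
  then show ?thesis
    unfolding down up by (simp add: algebra_simps sum.distrib sum_distrib_left)
qed

lemma sum_id_ballot:
  "1 \<le> n \<Longrightarrow> n \<le> N \<Longrightarrow> (\<Sum>l\<le>N. real l * ballot n (int l)) = 4 ^ (n - 1)"
proof (induction n arbitrary: N rule: nat_induct_at_least)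
  case base
  have "real l * ballot 1 (int l) = (if l = 1 then 1 else 0)" for l
    by (simp add: ballot_Suc_0_of_nat)
  with base show ?case by simp
next
  case (Suc n)
  have "(\<Sum>l\<le>N. real l * ballot (Suc n) (int l)) =
      (\<Sum>l\<le>N. (real l + 1 + 2 * real l + (real l - 1)) * ballot n (int l))"
    using sum_ballot_Suc[of n N "\<lambda>x. x"] Suc by simp
  also have "\<dots> = 4 * (\<Sum>l\<le>N. real l * ballot n (int l))"
    by (simp add: sum_distrib_left algebra_simps)
  finally show ?case
    using Suc by (simp add: power_Suc[symmetric] del: power_Suc)
qed

definition fringe_weight :: "real \<Rightarrow> real" where
  "fringe_weight x = (2 * x ^ 3 + x) / 3"

lemma fringe_weight_shift:
  "fringe_weight (x + 1) + 2 * fringe_weight x + fringe_weight (x - 1) = 4 * fringe_weight x + 4 * x"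
  by (simp add: fringe_weight_def power3_eq_cube algebra_simps divide_simps)

lemma sum_fringe_weight_ballot:
  "1 \<le> n \<Longrightarrow> n \<le> N \<Longrightarrow> (\<Sum>l\<le>N. fringe_weight (real l) * ballot n (int l)) = real n * 4 ^ (n - 1)"
proof (induction n arbitrary: N rule: nat_induct_at_least)
  case base
  have "fringe_weight (real l) * ballot 1 (int l) = (if l = 1 then 1 else 0)" for l
    by (simp add: ballot_Suc_0_of_nat fringe_weight_def)
  with base show ?case by simp
next
  case (Suc n)
  have "(\<Sum>l\<le>N. fringe_weight (real l) * ballot (Suc n) (int l)) =
      (\<Sum>l\<le>N. (4 * fringe_weight (real l) + 4 * real l) * ballot n (int l))"
    using sum_ballot_Suc[of n N fringe_weight] Suc fringe_weight_shift
    by (simp add: fringe_weight_def[of 0])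
  also have "\<dots> = 4 * (\<Sum>l\<le>N. fringe_weight (real l) * ballot n (int l))
      + 4 * (\<Sum>l\<le>N. real l * ballot n (int l))"
    by (simp add: sum_distrib_left algebra_simps sum.distrib)
  also have "\<dots> = real (Suc n) * 4 ^ n"
    using Suc sum_id_ballot[of n N] by (cases n) (simp_all add: algebra_simps)
  finally show ?case by simp
qed

subsection \<open>The fringe sizes in closed form\<close>

lemma ballot_scaled_eq_0:
  assumes "k < l"
  shows "ballot k (2 ^ r * int l) = 0"
proof (rule ballot_eq_0_above)
  have "int l \<le> 2 ^ r * int l"
    using mult_le_cancel_right1[of "int l" "2 ^ r"] by simp
  with assms show "int k < 2 ^ r * int l" by linarith
qed

lemma sum_ballot_scaled_extend:
  "k \<le> n \<Longrightarrow> (\<Sum>l\<le>k. f l * ballot k (2 ^ r * int l)) = (\<Sum>l\<le>n. f l * ballot k (2 ^ r * int l))"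
  by (rule sum.mono_neutral_left) (auto simp: ballot_scaled_eq_0)

lemma sum_mult_hv_weighted_ballot:
  assumes "1 \<le> n"
  shows "(\<Sum>k\<le>n. mult_hv n k * (\<Sum>l\<le>k. fringe_weight (real l) * ballot k (2 ^ r * int l)))
    = (\<Sum>l\<le>n. fringe_weight (real l) * ballot n (2 ^ Suc r * int l))"
proof -
  have "(\<Sum>k\<le>n. mult_hv n k * (\<Sum>l\<le>k. fringe_weight (real l) * ballot k (2 ^ r * int l)))
      = (\<Sum>k\<le>n. \<Sum>l\<le>n. fringe_weight (real l) * (mult_hv n k * ballot k (2 ^ r * int l)))"
    by (rule sum.cong[OF refl]) (simp add: sum_ballot_scaled_extend sum_distrib_left mult.left_commute)
  also have "\<dots> = (\<Sum>l\<le>n. fringe_weight (real l) * (\<Sum>k\<le>n. mult_hv n k * ballot k (2 ^ r * int l)))"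
    by (subst sum.swap) (simp add: sum_distrib_left)
  also have "\<dots> = (\<Sum>l\<le>n. fringe_weight (real l) * ballot n (2 ^ Suc r * int l))"
    using sum_mult_ballot_double[OF assms order_refl] by (simp add: mult.assoc)
  finally show ?thesis .
qed

lemma fringe_total_eq:
  "1 \<le> n \<Longrightarrow> fringe_total r n = 4 ^ (r + 1) * (\<Sum>l\<le>n. fringe_weight (real l) * ballot n (2 ^ r * int l))"
proof (induction r arbitrary: n)
  case 0
  then show ?case
    using sum_fringe_weight_ballot[of n n] by (cases n) (simp_all add: fringe_total_0)
next
  case (Suc r)
  show ?case
  proof (cases "n = 1")
    case True
    then show ?thesis
      using fringe_total_Suc_1[of r] ballot_Suc_0_even[of "2 ^ r * int _"] by (simp add: mult.assoc)
  next
    case False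
    have "fringe_total (Suc r) n = 4 * (\<Sum>k\<le>n. mult_hv n k * fringe_total r k)"
      using False Suc.prems by (intro fringe_total_Suc) simp
    also have "\<dots> = 4 * 4 ^ (r + 1) *
        (\<Sum>k\<le>n. mult_hv n k * (\<Sum>l\<le>k. fringe_weight (real l) * ballot k (2 ^ r * int l)))"
    proof -
      have "mult_hv n k * fringe_total r k =
          4 ^ (r + 1) * (mult_hv n k * (\<Sum>l\<le>k. fringe_weight (real l) * ballot k (2 ^ r * int l)))"
        for k by (cases k) (simp_all add: Suc.IH)
      then show ?thesis by (simp add: sum_distrib_left mult.assoc)
    qed
    finally show ?thesis
      using Suc.prems by (simp add: sum_mult_hv_weighted_ballot)
  qed
qed

lemma suminf_weighted_ballot:
  "(\<Sum>k. fringe_weight (real (Suc k)) * ballot n (2 ^ r * int (Suc k)))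
     = (\<Sum>l\<le>n. fringe_weight (real l) * ballot n (2 ^ r * int l))"
proof -
  have "(\<Sum>k. fringe_weight (real (Suc k)) * ballot n (2 ^ r * int (Suc k)))
      = (\<Sum>k<n. fringe_weight (real (Suc k)) * ballot n (2 ^ r * int (Suc k)))"
  proof (rule suminf_finite)
    fix k
    assume "k \<notin> {..<n}"
    then show "fringe_weight (real (Suc k)) * ballot n (2 ^ r * int (Suc k)) = 0"
      using ballot_scaled_eq_0[of n "Suc k" r] by simp
  qed simp
  also have "\<dots> = (\<Sum>l\<le>n. fringe_weight (real l) * ballot n (2 ^ r * int l))"
    by (simp add: sum.atMost_shift fringe_weight_def)
  finally show ?thesis .
qed

theorem proposition6:
  fixes n r :: nat
  assumes "n \<ge> 1"
  shows "expected_fringe n r =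
    (4::real) powi (int r + 1 - int n) *
      (\<Sum>k. (2 * real (Suc k) ^ 3 + real (Suc k)) / 3 *
         (real (binomZ (2 * n - 1) (int n - 2 ^ r * int (Suc k)))
          - real (binomZ (2 * n - 1) (int n - 2 ^ r * int (Suc k) - 1))))"
proof -
  have "int r + 1 - int n = int (r + 1) - int n" by simp
  moreover have "(4::real) powi (int (r + 1) - int n) = 4 powi int (r + 1) / 4 powi int n"
    by (rule power_int_diff) simp
  ultimately have "(4::real) powi (int r + 1 - int n) = 4 ^ (r + 1) / 4 ^ n"
    by (simp only: power_int_of_nat)
  moreover have "expected_fringe n r = fringe_total r n / 4 ^ n"
    by (simp add: expected_fringe_def fringe_total_def path_sum_def)
  ultimately show ?thesis
    using fringe_total_eq[OF assms, of r] suminf_weighted_ballot[of n r]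
    by (simp add: fringe_weight_def ballot_def)
qed

end
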